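(* Let $k$ be a local field and $k_0$ its prime field. Let $(P_n)_n$ be a sequence of monic polynomials in $k[X]$ whose degrees tend to $+\infty$, and let $\xi_1,\dots,\xi_m\in k$. Then there exists $\xi\in k$, transcendental over $k_0(\xi_1,\dots,\xi_m)$, such that the sequence $(|P_n(\xi)|)_n$ is unbounded.
   Context: $|\cdot|$ is the absolute value of the local field $k$. *)

theory Defs
  imports Complex_Main "HOL-Computational_Algebra.Polynomial"
begin

definition is_abs_value :: "('a::field \<Rightarrow> real) \<Rightarrow> bool" where
  "is_abs_value f \<longleftrightarrow>
     (\<forall>x. f x \<ge> 0) \<and> (\<forall>x. f x = 0 \<longleftrightarrow> x = 0) \<and>
     (\<forall>x y. f (x * y) = f x * f y) \<and> (\<forall>x y. f (x + y) \<le> f x + f y)"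

text \<open>A local field: a field with a nontrivial absolute value whose induced metric
  topology is locally compact, i.e. the closed unit ball is (sequentially) compact.\<close>
definition local_field :: "('a::field \<Rightarrow> real) \<Rightarrow> bool" where
  "local_field f \<longleftrightarrow> is_abs_value f \<and> (\<exists>x. f x \<noteq> 0 \<and> f x \<noteq> 1) \<and>
     (\<forall>s::nat \<Rightarrow> 'a. (\<forall>n. f (s n) \<le> 1) \<longrightarrow>
        (\<exists>r L. strict_mono r \<and> f L \<le> 1 \<and> (\<lambda>n. f (s (r n) - L)) \<longlonglongrightarrow> 0))"

definition is_subfield :: "'a::field set \<Rightarrow> bool" where
  "is_subfield S \<longleftrightarrow> 0 \<in> S \<and> 1 \<in> S \<and> (\<forall>x\<in>S. \<forall>y\<in>S. x + y \<in> S \<and> x * y \<in> S) \<and>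
     (\<forall>x\<in>S. - x \<in> S \<and> inverse x \<in> S)"

text \<open>Subfield generated by X; for X = {} this is the prime field, so
  gen_subfield X = k0(X).\<close>
definition gen_subfield :: "'a::field set \<Rightarrow> 'a set" where
  "gen_subfield X = \<Inter>{S. is_subfield S \<and> X \<subseteq> S}"

definition transcendental_over :: "'a::field set \<Rightarrow> 'a \<Rightarrow> bool" where
  "transcendental_over K x \<longleftrightarrow>
     (\<forall>p::'a poly. p \<noteq> 0 \<and> (\<forall>i. coeff p i \<in> K) \<longrightarrow> poly p x \<noteq> 0)"

end

theory Submission
  imports Defs "HOL-Library.Countable_Set"
begin

text \<open>Fix \<open>s\<close> with \<open>0 < |s| \<le> 1/8\<close> and \<open>\<lambda>\<close> with \<open>|\<lambda>| |s|^16 \<ge> 4\<close>, and send a binary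
  sequence \<open>e\<close> to the point \<open>\<lambda> \<Sum>\<^sub>i e\<^sub>i s^i\<close> of a Cantor set; points whose sequences first
  differ at index \<open>l\<close> are at distance at least \<open>|\<lambda>| |s|^l / 2\<close>. If a monic \<open>P\<close> of degree \<open>d\<close>
  were bounded by \<open>B\<close> at points with \<open>d + 1\<close> distinct prefixes of length \<open>m\<close>, where
  \<open>2^m \<le> 16 d\<close>, Lagrange interpolation at these points would give
  \<open>1 \<le> \<Sum>\<^sub>w |P x\<^sub>w| / \<Prod>\<^sub>v\<^sub>\<noteq>\<^sub>w |x\<^sub>w - x\<^sub>v|\<close>. Summing the lengths of common prefixes shows that
  each denominator is at least \<open>(|\<lambda>|/2)^d |s|^(2^m) \<ge> 2^d\<close>, so the right-hand side is at most
  \<open>(d + 1) B / 2^d < 1\<close> once \<open>d\<close> is large. Hence for every bound the sequences with bounded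
  values meet at most a quarter of the prefixes at some level, and adding finitely many
  algebraic points keeps this below one half. A measure argument on Cantor space together with
  Koenig's lemma then gives a sequence outside the increasing union of these sets, i.e. a
  transcendental point at which the values are unbounded.\<close>

locale absolute_value =
  fixes absv :: "'a::field \<Rightarrow> real"
  assumes is_abs_value: "is_abs_value absv"
begin

lemma abs_val_nonneg [simp]: "absv x \<ge> 0"
  using is_abs_value unfolding is_abs_value_def by blast

lemma abs_val_eq_0_iff [simp]: "absv x = 0 \<longleftrightarrow> x = 0"
  using is_abs_value unfolding is_abs_value_def by blast

lemma abs_val_0 [simp]: "absv 0 = 0"
  by simp

lemma abs_val_pos_iff [simp]: "absv x > 0 \<longleftrightarrow> x \<noteq> 0"
  using abs_val_nonneg[of x] abs_val_eq_0_iff[of x] by linarith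

lemma abs_val_mult [simp]: "absv (x * y) = absv x * absv y"
  using is_abs_value unfolding is_abs_value_def by blast

lemma abs_val_triangle: "absv (x + y) \<le> absv x + absv y"
  using is_abs_value unfolding is_abs_value_def by blast

lemma abs_val_1 [simp]: "absv 1 = 1"
  using abs_val_mult[of 1 1] abs_val_eq_0_iff[of 1] by (metis mult_cancel_left1 one_neq_zero)

lemma abs_val_minus [simp]: "absv (- x) = absv x"
proof -
  have "absv (-1) * absv (-1) = 1"
    using abs_val_mult[of "-1" "-1"] by simp
  then have "absv (-1) = 1"
    using abs_val_nonneg[of "-1"] by (metis abs_of_nonneg abs_square_eq_1 power2_eq_square)
  then show ?thesis
    using abs_val_mult[of "-1" x] by simp
qed

lemma abs_val_minus_commute: "absv (x - y) = absv (y - x)"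
  using abs_val_minus[of "x - y"] by simp

lemma abs_val_triangle_diff: "absv (x - z) \<le> absv (x - y) + absv (y - z)"
  using abs_val_triangle[of "x - y" "y - z"] by simp

lemma abs_val_diff_le: "absv (x - y) \<le> absv x + absv y"
  using abs_val_triangle[of x "- y"] by simp

lemma abs_val_power [simp]: "absv (x ^ n) = absv x ^ n"
  by (induction n) auto

lemma abs_val_inverse [simp]: "absv (inverse x) = inverse (absv x)"
proof (cases "x = 0")
  case False
  then have "absv x * absv (inverse x) = 1"
    using abs_val_mult[of x "inverse x"] by simp
  then show ?thesis
    by (simp add: inverse_unique)
qed simp

lemma abs_val_divide [simp]: "absv (x / y) = absv x / absv y"
  by (simp add: divide_inverse)

lemma abs_val_prod: "absv (prod g S) = (\<Prod>i\<in>S. absv (g i))"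
  by (induction S rule: infinite_finite_induct) auto

lemma abs_val_sum_le: "absv (sum g S) \<le> (\<Sum>i\<in>S. absv (g i))"
proof (induction S rule: infinite_finite_induct)
  case (insert x F)
  then show ?case
    using abs_val_triangle[of "g x" "sum g F"] by simp
qed auto

end

locale local_field_abs =
  fixes absv :: "'a::field \<Rightarrow> real"
  assumes local_field: "local_field absv"

sublocale local_field_abs \<subseteq> absolute_value
  using local_field unfolding local_field_def by unfold_locales simp

context local_field_abs
begin

lemma bounded_seq_convergent_subseq:
  fixes q :: "nat \<Rightarrow> 'a"
  assumes "\<And>n. absv (q n) \<le> 1"
  obtains r L where "strict_mono r" "(\<lambda>n. absv (q (r n) - L)) \<longlonglongrightarrow> 0"
  using local_field assms unfolding local_field_def by blast

lemma ex_abs_val_gt_1: "\<exists>t. absv t > 1"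
proof -
  obtain x where x: "absv x \<noteq> 0" "absv x \<noteq> 1"
    using local_field unfolding local_field_def by blast
  show ?thesis
  proof (cases "absv x > 1")
    case False
    with x have "0 < absv x" "absv x < 1"
      using abs_val_nonneg[of x] by linarith+
    then have "absv (inverse x) > 1"
      by (simp add: one_less_inverse)
    then show ?thesis ..
  qed blast
qed

lemma ex_abs_val_ge: "\<exists>t. absv t \<ge> R"
proof -
  obtain t where "absv t > 1"
    using ex_abs_val_gt_1 ..
  then obtain n where "R < absv t ^ n"
    using real_arch_pow by blast
  then have "absv (t ^ n) \<ge> R"
    by simp
  then show ?thesis ..
qed

lemma ex_nonzero_abs_val_le:
  assumes "\<epsilon> > 0"
  shows "\<exists>s. s \<noteq> 0 \<and> absv s \<le> \<epsilon>"
proof -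
  obtain t where t: "absv t \<ge> inverse \<epsilon>"
    using ex_abs_val_ge ..
  with assms have "t \<noteq> 0"
    using positive_imp_inverse_positive[OF assms] by auto
  moreover have "absv (inverse t) \<le> \<epsilon>"
    using t assms by (simp add: inverse_le_imp_le)
  ultimately show ?thesis
    by (intro exI[of _ "inverse t"]) simp
qed

end

definition prefix :: "nat \<Rightarrow> (nat \<Rightarrow> bool) \<Rightarrow> nat set" where
  "prefix m e = {i. i < m \<and> e i}"

lemma prefix_eq_iff: "prefix m e = prefix m e' \<longleftrightarrow> (\<forall>i<m. e i = e' i)"
  unfolding prefix_def by blast

lemma prefix_subset: "prefix m e \<subseteq> {..<m}"
  by (auto simp: prefix_def)

lemma prefix_restrict: "m \<le> M \<Longrightarrow> prefix M e \<inter> {..<m} = prefix m e"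
  by (auto simp: prefix_def)

lemma prefix_indicator: "u \<subseteq> {..<m} \<Longrightarrow> prefix m (\<lambda>i. i \<in> u) = u"
  by (auto simp: prefix_def)

lemma prefix_image_UNIV: "prefix m ` UNIV = Pow {..<m}"
  using prefix_subset prefix_indicator by blast

lemma finite_prefix_image [simp]: "finite (prefix m ` A)"
  by (rule finite_subset[of _ "Pow {..<m}"]) (use prefix_subset in auto)

lemma card_prefix_image_le_level:
  assumes "m \<le> M"
  shows "card (prefix M ` A) \<le> 2 ^ (M - m) * card (prefix m ` A)"
proof -
  define split where "split u = (u \<inter> {..<m}, u \<inter> {m..<M})" for u :: "nat set"
  have "inj_on split (prefix M ` A)"
  proof (rule inj_onI)
    fix u v assume "u \<in> prefix M ` A" "v \<in> prefix M ` A" "split u = split v"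
    moreover have "w = w \<inter> {..<m} \<union> w \<inter> {m..<M}" if "w \<subseteq> {..<M}" for w
      using that by auto
    ultimately show "u = v"
      using prefix_subset unfolding split_def by (metis Pair_inject image_iff)
  qed
  then have "card (prefix M ` A) = card (split ` prefix M ` A)"
    by (simp add: card_image)
  also have "\<dots> \<le> card (prefix m ` A \<times> Pow {m..<M})"
    by (rule card_mono) (use assms in \<open>auto simp: split_def prefix_restrict\<close>)
  also have "\<dots> = 2 ^ (M - m) * card (prefix m ` A)"
    by (simp add: card_cartesian_product card_Pow)
  finally show ?thesis .
qed

lemma ex_first_difference:
  assumes "e \<noteq> e'"
  obtains l where "prefix l e = prefix l e'" "e l \<noteq> e' l"
proof -
  define l where "l = (LEAST i. e i \<noteq> e' i)"
  from assms obtain i where "e i \<noteq> e' i"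
    by blast
  then have "e l \<noteq> e' l"
    unfolding l_def by (rule LeastI)
  moreover have "prefix l e = prefix l e'"
    unfolding prefix_eq_iff l_def using not_less_Least by blast
  ultimately show thesis
    using that by blast
qed

definition cylinder :: "nat \<Rightarrow> (nat \<Rightarrow> bool) set \<Rightarrow> (nat \<Rightarrow> bool) set" where
  "cylinder m A = {e. prefix m e \<in> prefix m ` A}"

text \<open>For the coin-tossing measure on Cantor space, \<open>prefix_density m A\<close> is the measure of
  \<open>cylinder m A\<close>; it decreases in \<open>m\<close> to the measure of the closure of \<open>A\<close>.\<close>

definition prefix_density :: "nat \<Rightarrow> (nat \<Rightarrow> bool) set \<Rightarrow> real" where
  "prefix_density m A = card (prefix m ` A) / 2 ^ m"

lemma subset_cylinder: "A \<subseteq> cylinder m A"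
  by (auto simp: cylinder_def)

lemma prefix_image_cylinder: "prefix m ` cylinder m A = prefix m ` A"
  by (auto simp: cylinder_def)

lemma prefix_density_nonneg: "prefix_density m A \<ge> 0"
  by (simp add: prefix_density_def)

lemma prefix_density_UNIV: "prefix_density m UNIV = 1"
  by (simp add: prefix_density_def prefix_image_UNIV card_Pow)

lemma prefix_density_mono:
  assumes "A \<subseteq> B"
  shows "prefix_density m A \<le> prefix_density m B"
proof -
  have "card (prefix m ` A) \<le> card (prefix m ` B)"
    using assms by (intro card_mono image_mono) auto
  then show ?thesis
    unfolding prefix_density_def by (simp add: divide_right_mono)
qed

lemma prefix_density_antimono:
  assumes "m \<le> M"
  shows "prefix_density M A \<le> prefix_density m A"
proof -
  have "real (card (prefix M ` A)) \<le> real (2 ^ (M - m) * card (prefix m ` A))"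
    using card_prefix_image_le_level[OF assms, of A] by (simp only: of_nat_le_iff)
  also have "\<dots> = 2 ^ (M - m) * real (card (prefix m ` A))"
    by simp
  also have "(2::real) ^ (M - m) = 2 ^ M / 2 ^ m"
    using assms by (simp add: power_diff)
  finally show ?thesis
    by (simp add: prefix_density_def field_simps)
qed

lemma prefix_density_Un_le: "prefix_density m (A \<union> B) \<le> prefix_density m A + prefix_density m B"
proof -
  have "card (prefix m ` (A \<union> B)) \<le> card (prefix m ` A) + card (prefix m ` B)"
    by (simp add: image_Un card_Un_le)
  then have "real (card (prefix m ` (A \<union> B))) \<le> real (card (prefix m ` A)) + real (card (prefix m ` B))"
    by linarith
  then show ?thesis
    unfolding prefix_density_def add_divide_distrib[symmetric] by (rule divide_right_mono) simp
qed

lemma prefix_density_finite_le: "finite F \<Longrightarrow> prefix_density m F \<le> card F / 2 ^ m"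
  unfolding prefix_density_def by (intro divide_right_mono) (auto intro: card_image_le)

lemma ex_prefix_density_Un_finite_lt:
  assumes "prefix_density m A < 1 / 4" and "finite F"
  shows "\<exists>M. prefix_density M (A \<union> F) < 1 / 2"
proof -
  define M where "M = max m (card F + 2)"
  have "(2::real) ^ (card F + 2) \<le> 2 ^ M"
    by (rule power_increasing) (simp_all add: M_def)
  then have "4 * 2 ^ card F \<le> (2::real) ^ M"
    by (simp add: power_add)
  then have "4 * real (card F) \<le> 2 ^ M"
    using of_nat_less_two_power[of "card F", where 'a = real] by linarith
  then have "real (card F) / 2 ^ M \<le> 1 / 4"
    by (simp add: field_simps)
  have "prefix_density M (A \<union> F) \<le> prefix_density M A + prefix_density M F"
    by (rule prefix_density_Un_le)
  also have "prefix_density M A \<le> prefix_density m A"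
    by (rule prefix_density_antimono) (simp add: M_def)
  also have "prefix_density M F \<le> real (card F) / 2 ^ M"
    using assms(2) by (rule prefix_density_finite_le)
  finally have "prefix_density M (A \<union> F) < 1 / 2"
    using assms(1) \<open>real (card F) / 2 ^ M \<le> 1 / 4\<close> by linarith
  then show ?thesis ..
qed

lemma ex_prefix_density_level_near_limit:
  assumes "prefix_density m A < c" "\<eta> > 0"
  shows "\<exists>m0. prefix_density m0 A < c \<and> (\<forall>M\<ge>m0. prefix_density m0 A - prefix_density M A \<le> \<eta>)"
proof -
  have "decseq (\<lambda>m. prefix_density m A)"
    by (simp add: decseq_def prefix_density_antimono)
  then obtain L where lim: "(\<lambda>m. prefix_density m A) \<longlonglongrightarrow> L" and L: "\<forall>m. L \<le> prefix_density m A"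
    using decseq_convergent prefix_density_nonneg by blast
  obtain N where N: "\<And>n. n \<ge> N \<Longrightarrow> prefix_density n A < L + \<eta>"
    using order_tendstoD(2)[OF lim, of "L + \<eta>"] assms(2) unfolding eventually_sequentially by auto
  define m0 where "m0 = max m N"
  have "prefix_density m0 A < c"
    using prefix_density_antimono[of m m0 A] assms(1) by (simp add: m0_def)
  moreover have "prefix_density m0 A - prefix_density M A \<le> \<eta>" for M
    using N[of m0] L[rule_format, of M] by (simp add: m0_def)
  ultimately show ?thesis
    by blast
qed

lemma card_UN_le_telescoping:
  fixes X Y :: "nat \<Rightarrow> 'a set"
  assumes "\<And>j. j \<le> J \<Longrightarrow> finite (X j)"
    and "\<And>j. j \<le> J \<Longrightarrow> Y j \<subseteq> X j" and "\<And>j. j \<le> J \<Longrightarrow> Y j \<subseteq> X J"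
  shows "real (card (\<Union>j\<le>J. X j)) \<le> real (card (X J)) + (\<Sum>j<J. real (card (X j)) - real (card (Y j)))"
proof -
  have "(\<Union>j\<le>J. X j) \<subseteq> X J \<union> (\<Union>j<J. X j - Y j)"
  proof
    fix u assume "u \<in> (\<Union>j\<le>J. X j)"
    then obtain j where j: "j \<le> J" "u \<in> X j"
      by blast
    show "u \<in> X J \<union> (\<Union>j<J. X j - Y j)"
    proof (cases "u \<in> Y j \<or> j = J")
      case True
      with j assms(3) show ?thesis
        by blast
    next
      case False
      with j have "j < J" "u \<in> X j - Y j"
        by auto
      then show ?thesis
        by blast
    qed
  qed
  then have "card (\<Union>j\<le>J. X j) \<le> card (X J \<union> (\<Union>j<J. X j - Y j))"
    using assms(1) by (intro card_mono) auto
  also have "\<dots> \<le> card (X J) + (\<Sum>j<J. card (X j - Y j))"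
    using card_Un_le card_UN_le[of "{..<J}" "\<lambda>j. X j - Y j"]
    by (metis (no_types, lifting) add_left_mono finite_lessThan order_trans)
  finally have "real (card (\<Union>j\<le>J. X j)) \<le> real (card (X J)) + (\<Sum>j<J. real (card (X j - Y j)))"
    by (simp only: of_nat_le_iff flip: of_nat_sum of_nat_add)
  also have "(\<Sum>j<J. real (card (X j - Y j))) = (\<Sum>j<J. real (card (X j)) - real (card (Y j)))"
  proof (rule sum.cong)
    fix j assume "j \<in> {..<J}"
    then have "finite (X j)" "Y j \<subseteq> X j"
      using assms(1,2) by auto
    then show "real (card (X j - Y j)) = real (card (X j)) - real (card (Y j))"
      by (simp add: card_Diff_subset card_mono of_nat_diff finite_subset)
  qed simp
  finally show ?thesis .
qed

lemma prefix_density_UN_le: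
  fixes A C :: "nat \<Rightarrow> (nat \<Rightarrow> bool) set"
  assumes "\<And>j. j \<le> J \<Longrightarrow> A j \<subseteq> C j" and "\<And>j. j \<le> J \<Longrightarrow> A j \<subseteq> A J"
  shows "prefix_density N (\<Union>j\<le>J. C j)
    \<le> prefix_density N (C J) + (\<Sum>j<J. prefix_density N (C j) - prefix_density N (A j))"
proof -
  have "A j \<subseteq> C J" if "j \<le> J" for j
    using assms that by blast
  then have "real (card (\<Union>j\<le>J. prefix N ` C j)) \<le> real (card (prefix N ` C J))
      + (\<Sum>j<J. real (card (prefix N ` C j)) - real (card (prefix N ` A j)))"
    using assms(1) by (intro card_UN_le_telescoping image_mono) auto
  then show ?thesis
    unfolding prefix_density_def image_UN
    by (simp add: divide_right_mono flip: add_divide_distrib sum_divide_distrib diff_divide_distrib)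
qed

lemma sum_inverse_power2_le: "(\<Sum>j<J. 1 / 2 ^ (j + 3) :: real) \<le> 1 / 4"
proof -
  have "(\<Sum>j<J. 1 / 2 ^ (j + 3) :: real) = (\<Sum>j<J. (1 / 2) ^ j) / 8"
    by (simp add: sum_divide_distrib power_add power_one_over)
  also have "(\<Sum>j<J. (1 / 2 :: real) ^ j) \<le> (\<Sum>j. (1 / 2) ^ j)"
    by (rule sum_le_suminf) (auto intro: summable_geometric)
  also have "\<dots> = 2"
    using suminf_geometric[of "1 / 2 :: real"] by simp
  finally show ?thesis
    by simp
qed

text \<open>A finitary form of continuity from below: as \<open>A\<close> is increasing, at a common level the
  cylinders over \<open>A j\<close> add at most \<open>1 / 2 ^ (j + 3)\<close> to those over \<open>A J\<close>, so together
  they miss more than a quarter of all prefixes.\<close>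

lemma ex_avoiding_finitely_many_cylinders:
  fixes A :: "nat \<Rightarrow> (nat \<Rightarrow> bool) set" and m :: "nat \<Rightarrow> nat" and J :: nat
  assumes "incseq A"
    and "\<And>j. prefix_density (m j) (A j) < 1 / 2"
    and "\<And>j M. m j \<le> M \<Longrightarrow> prefix_density (m j) (A j) - prefix_density M (A j) \<le> 1 / 2 ^ (j + 3)"
  shows "\<exists>e. \<forall>j\<le>J. e \<notin> cylinder (m j) (A j)"
proof -
  define N where "N = Max (m ` {..J})"
  define C where "C j = cylinder (m j) (A j)" for j
  have mN: "m j \<le> N" if "j \<le> J" for j
    using that by (simp add: N_def)
  have C_le: "prefix_density N (C j) \<le> prefix_density (m j) (A j)" if "j \<le> J" for j
    using prefix_density_antimono[OF mN[OF that], of "C j"]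
    by (simp add: C_def prefix_density_def prefix_image_cylinder)
  have "prefix_density N (\<Union>j\<le>J. C j)
      \<le> prefix_density N (C J) + (\<Sum>j<J. prefix_density N (C j) - prefix_density N (A j))"
    using subset_cylinder assms(1) by (intro prefix_density_UN_le) (auto simp: C_def incseq_def)
  also have "\<dots> \<le> prefix_density (m J) (A J) + (\<Sum>j<J. 1 / 2 ^ (j + 3))"
  proof (intro add_mono sum_mono)
    fix j assume "j \<in> {..<J}"
    then show "prefix_density N (C j) - prefix_density N (A j) \<le> 1 / 2 ^ (j + 3)"
      using C_le[of j] assms(3)[OF mN, of j] by simp
  qed (use C_le in simp)
  also have "\<dots> < 1"
    using assms(2)[of J] sum_inverse_power2_le[of J] by simp
  finally have "(\<Union>j\<le>J. C j) \<noteq> UNIV"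
    using prefix_density_UNIV by force
  then show ?thesis
    by (auto simp: C_def)
qed

lemma prefix_diagonal:
  assumes "\<And>k. prefix k (f (Suc k)) = prefix k (f k)"
  shows "prefix k (\<lambda>i. f (Suc i) i) = prefix k (f k)"
proof (induction k)
  case (Suc k)
  then show ?case
    using assms[of k] by (auto simp: prefix_eq_iff less_Suc_eq)
qed (simp add: prefix_def)

lemma ex_avoiding_all_cylinders:
  fixes C :: "nat \<Rightarrow> (nat \<Rightarrow> bool) set" and m :: "nat \<Rightarrow> nat"
  assumes "\<And>J. \<exists>e. \<forall>j\<le>J. e \<notin> cylinder (m j) (C j)"
  shows "\<exists>e. \<forall>j. e \<notin> cylinder (m j) (C j)"
proof -
  \<comment> \<open>Koenig's lemma on the tree of good prefixes.\<close>
  define good where "good k e \<longleftrightarrow>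
    (\<forall>J. \<exists>e'. prefix k e' = prefix k e \<and> (\<forall>j\<le>J. e' \<notin> cylinder (m j) (C j)))" for k e
  have good_step: "\<exists>e'. good (Suc k) e' \<and> prefix k e' = prefix k e" if "good k e" for k e
  proof (rule ccontr)
    assume "\<nexists>e'. good (Suc k) e' \<and> prefix k e' = prefix k e"
    then have "\<not> good (Suc k) (e(k := b))" for b
      by (auto simp: prefix_eq_iff)
    then obtain J where J: "\<And>b e'. prefix (Suc k) e' = prefix (Suc k) (e(k := b)) \<Longrightarrow>
        \<exists>j\<le>J b. e' \<in> cylinder (m j) (C j)"
      unfolding good_def by metis
    obtain e' where e': "prefix k e' = prefix k e" "\<forall>j\<le>max (J True) (J False). e' \<notin> cylinder (m j) (C j)"
      using \<open>good k e\<close> unfolding good_def by blast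
    have "prefix (Suc k) e' = prefix (Suc k) (e(k := e' k))"
      using e'(1) by (auto simp: prefix_eq_iff less_Suc_eq)
    then obtain j where "j \<le> J (e' k)" "e' \<in> cylinder (m j) (C j)"
      using J by blast
    moreover have "J (e' k) \<le> max (J True) (J False)"
      by (cases "e' k") auto
    ultimately show False
      using e'(2) by (meson order_trans)
  qed
  have "good 0 e" for e
    using assms by (simp add: good_def prefix_def)
  then obtain f where f: "\<And>k. good k (f k)" "\<And>k. prefix k (f (Suc k)) = prefix k (f k)"
    using dependent_nat_choice[of good "\<lambda>k e e'. prefix k e' = prefix k e"] good_step by metis
  define e where "e i = f (Suc i) i" for i
  have prefix_e: "prefix k e = prefix k (f k)" for k
    unfolding e_def using f(2) by (rule prefix_diagonal)
  have "e \<notin> cylinder (m j) (C j)" for j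
  proof
    assume "e \<in> cylinder (m j) (C j)"
    obtain e' where "prefix (m j) e' = prefix (m j) (f (m j))" "e' \<notin> cylinder (m j) (C j)"
      using f(1)[of "m j"] unfolding good_def by blast
    with \<open>e \<in> cylinder (m j) (C j)\<close> show False
      by (simp add: cylinder_def prefix_e)
  qed
  then show ?thesis
    by blast
qed

lemma ex_not_in_incseq_of_low_density:
  fixes A :: "nat \<Rightarrow> (nat \<Rightarrow> bool) set"
  assumes "incseq A" and "\<And>j. \<exists>m. prefix_density m (A j) < 1 / 2"
  shows "\<exists>e. \<forall>j. e \<notin> A j"
proof -
  have "\<exists>m0. prefix_density m0 (A j) < 1 / 2 \<and>
      (\<forall>M\<ge>m0. prefix_density m0 (A j) - prefix_density M (A j) \<le> 1 / 2 ^ (j + 3))" for j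
    using assms(2)[of j] ex_prefix_density_level_near_limit by (metis divide_pos_pos zero_less_numeral zero_less_one zero_less_power)
  then obtain m where "\<And>j. prefix_density (m j) (A j) < 1 / 2"
    "\<And>j M. m j \<le> M \<Longrightarrow> prefix_density (m j) (A j) - prefix_density M (A j) \<le> 1 / 2 ^ (j + 3)"
    by metis
  with assms(1) have "\<exists>e. \<forall>j. e \<notin> cylinder (m j) (A j)"
    by (intro ex_avoiding_all_cylinders ex_avoiding_finitely_many_cylinders)
  then show ?thesis
    using subset_cylinder by blast
qed

lemma ex_not_in_countable_Un_incseq_of_low_density:
  fixes B :: "nat \<Rightarrow> (nat \<Rightarrow> bool) set"
  assumes "countable C" and "incseq B" and "\<And>j. \<exists>m. prefix_density m (B j) < 1 / 4"
  shows "\<exists>e. e \<notin> C \<and> (\<forall>j. e \<notin> B j)"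
proof -
  define A where "A j = B j \<union> from_nat_into C ` {..j}" for j
  have "incseq A"
    using assms(2) unfolding incseq_def A_def by auto
  moreover have "\<exists>m. prefix_density m (A j) < 1 / 2" for j
    using assms(3)[of j] ex_prefix_density_Un_finite_lt unfolding A_def by blast
  ultimately obtain e where e: "\<And>j. e \<notin> A j"
    using ex_not_in_incseq_of_low_density by blast
  have "e \<notin> C"
  proof
    assume "e \<in> C"
    then obtain j where "e = from_nat_into C j"
      using subset_range_from_nat_into[OF assms(1)] by blast
    with e[of j] show False
      by (simp add: A_def)
  qed
  with e show ?thesis
    by (auto simp: A_def)
qed

lemma sum_card_common_prefix_le:
  fixes E :: "(nat \<Rightarrow> bool) set"
  assumes "finite E" and "inj_on (prefix m) E"
  shows "(\<Sum>e'\<in>E. card {i. i < m \<and> prefix (Suc i) e' = prefix (Suc i) e}) \<le> 2 ^ m"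
proof -
  let ?R = "\<lambda>e' i. prefix (Suc i) e' = prefix (Suc i) e"
  have fibre_card: "card {e' \<in> E. ?R e' i} \<le> 2 ^ (m - Suc i)" if "i < m" for i
  proof -
    let ?S = "{e' \<in> E. ?R e' i}"
    have "inj_on (prefix m) ?S"
      using assms(2) by (rule inj_on_subset) auto
    then have "card ?S = card (prefix m ` ?S)"
      by (simp add: card_image)
    also have "\<dots> \<le> 2 ^ (m - Suc i) * card (prefix (Suc i) ` ?S)"
      using that by (intro card_prefix_image_le_level) simp
    also have "card (prefix (Suc i) ` ?S) \<le> 1"
      using card_mono[of "{prefix (Suc i) e}" "prefix (Suc i) ` ?S"] by auto
    finally show ?thesis
      by simp
  qed
  have "(\<Sum>e'\<in>E. card {i. i < m \<and> ?R e' i}) = (\<Sum>e'\<in>E. \<Sum>i\<in>{i. i \<in> {..<m} \<and> ?R e' i}. 1)"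
    by simp
  also have "\<dots> = (\<Sum>i\<in>{..<m}. \<Sum>e'\<in>{e'. e' \<in> E \<and> ?R e' i}. 1)"
    using assms(1) by (intro sum.swap_restrict) auto
  also have "\<dots> = (\<Sum>i<m. card {e' \<in> E. ?R e' i})"
    by simp
  also have "\<dots> \<le> (\<Sum>i<m. 2 ^ (m - Suc i))"
    using fibre_card by (intro sum_mono) simp
  also have "\<dots> = (\<Sum>i<m. 2 ^ i)"
    by (rule sum.nat_diff_reindex)
  also have "\<dots> \<le> 2 ^ m"
    using mask_eq_sum_exp[of m, where 'a = nat] by (simp add: lessThan_def)
  finally show ?thesis .
qed

text \<open>Both sides are the leading coefficient of \<open>Q\<close>, read off from its Lagrange
  interpolation form at the nodes \<open>x i\<close>.\<close>

lemma monic_interpolation_sum: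
  fixes Q :: "'a::field poly" and x :: "'b \<Rightarrow> 'a"
  assumes fin: "finite I" and inj: "inj_on x I" and monic: "lead_coeff Q = 1"
    and deg: "degree Q + 1 = card I"
  shows "(\<Sum>i\<in>I. poly Q (x i) / (\<Prod>j\<in>I-{i}. x i - x j)) = 1"
proof -
  define c where "c i = poly Q (x i) / (\<Prod>j\<in>I-{i}. x i - x j)" for i
  define B where "B i = (\<Prod>j\<in>I-{i}. [:- x j, 1:])" for i
  define L where "L = (\<Sum>i\<in>I. smult (c i) (B i))"
  have degree_B: "degree (B i) = degree Q" if "i \<in> I" for i
  proof -
    have "degree (B i) = (\<Sum>j\<in>I-{i}. degree [:- x j, 1:])"
      unfolding B_def by (rule degree_prod_eq_sum_degree) auto
    also have "\<dots> = degree Q"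
      using that fin deg by simp
    finally show ?thesis .
  qed
  have "coeff (B i) (degree Q) = 1" if "i \<in> I" for i
    using degree_B[OF that] lead_coeff_prod[of "\<lambda>j. [:- x j, 1:]" "I - {i}"] by (simp add: B_def)
  then have coeff_L: "coeff L (degree Q) = (\<Sum>i\<in>I. c i)"
    unfolding L_def coeff_sum by simp
  have "degree L \<le> degree Q"
    unfolding L_def
    by (rule degree_sum_le[OF fin]) (use degree_B degree_smult_le order_trans in metis)
  moreover have "poly L (x k) = poly Q (x k)" if k: "k \<in> I" for k
  proof -
    have "poly (B i) (x k) = 0" if "i \<in> I" "i \<noteq> k" for i
      unfolding B_def poly_prod using fin k that by (intro prod_zero) auto
    then have "(\<Sum>i\<in>I-{k}. c i * poly (B i) (x k)) = 0"
      by (intro sum.neutral) auto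
    then have "poly L (x k) = c k * poly (B k) (x k)"
      unfolding L_def poly_sum using fin k by (simp add: sum.remove[of _ k])
    moreover have "poly (B k) (x k) = (\<Prod>j\<in>I-{k}. x k - x j)"
      unfolding B_def poly_prod by simp
    moreover have "(\<Prod>j\<in>I-{k}. x k - x j) \<noteq> 0"
      using fin inj k by (subst prod_zero_iff) (auto simp: inj_on_def)
    ultimately show ?thesis
      by (simp add: c_def)
  qed
  ultimately have "Q = L"
    using fin inj deg by (intro poly_eqI_degree[of "x ` I"]) (auto simp: card_image)
  with coeff_L monic show ?thesis
    by (simp add: c_def)
qed

lemma (in absolute_value) monic_interpolation_abs_ge:
  fixes Q :: "'a poly" and x :: "'b \<Rightarrow> 'a"
  assumes "finite I" "inj_on x I" "lead_coeff Q = 1" "degree Q + 1 = card I"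
  shows "1 \<le> (\<Sum>i\<in>I. absv (poly Q (x i)) / (\<Prod>j\<in>I-{i}. absv (x i - x j)))"
proof -
  have "1 = absv (\<Sum>i\<in>I. poly Q (x i) / (\<Prod>j\<in>I-{i}. x i - x j))"
    using monic_interpolation_sum[OF assms] by simp
  also have "\<dots> \<le> (\<Sum>i\<in>I. absv (poly Q (x i) / (\<Prod>j\<in>I-{i}. x i - x j)))"
    by (rule abs_val_sum_le)
  finally show ?thesis
    by (simp add: abs_val_prod)
qed

primrec subfield_stage :: "'a::field set \<Rightarrow> nat \<Rightarrow> 'a set" where
  "subfield_stage X 0 = X \<union> {0, 1}"
| "subfield_stage X (Suc n) = subfield_stage X n
    \<union> (\<lambda>(a, b). a + b) ` (subfield_stage X n \<times> subfield_stage X n)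
    \<union> (\<lambda>(a, b). a * b) ` (subfield_stage X n \<times> subfield_stage X n)
    \<union> uminus ` subfield_stage X n \<union> inverse ` subfield_stage X n"

lemma countable_subfield_stage: "countable X \<Longrightarrow> countable (subfield_stage X n)"
  by (induction n) auto

lemma subfield_stage_mono: "m \<le> n \<Longrightarrow> subfield_stage X m \<subseteq> subfield_stage X n"
  by (induction n rule: dec_induct) auto

lemma subset_UN_subfield_stage: "X \<union> {0, 1} \<subseteq> (\<Union>n. subfield_stage X n)"
  using UN_upper[of 0 UNIV "subfield_stage X"] by simp

lemma is_subfield_UN_subfield_stage: "is_subfield (\<Union>n. subfield_stage X n)"
  unfolding is_subfield_def
proof (intro conjI ballI)
  show "0 \<in> (\<Union>n. subfield_stage X n)" "1 \<in> (\<Union>n. subfield_stage X n)"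
    using subset_UN_subfield_stage by auto
next
  fix x y assume "x \<in> (\<Union>n. subfield_stage X n)" "y \<in> (\<Union>n. subfield_stage X n)"
  then obtain i j where "x \<in> subfield_stage X i" "y \<in> subfield_stage X j"
    by blast
  then have "x \<in> subfield_stage X (max i j)" "y \<in> subfield_stage X (max i j)"
    using subfield_stage_mono[of i "max i j" X] subfield_stage_mono[of j "max i j" X] by auto
  then have "x + y \<in> subfield_stage X (Suc (max i j))" "x * y \<in> subfield_stage X (Suc (max i j))"
    by auto
  then show "x + y \<in> (\<Union>n. subfield_stage X n)" "x * y \<in> (\<Union>n. subfield_stage X n)"
    by blast+
next
  fix x assume "x \<in> (\<Union>n. subfield_stage X n)"
  then obtain i where "x \<in> subfield_stage X i"
    by blast
  then have "- x \<in> subfield_stage X (Suc i)" "inverse x \<in> subfield_stage X (Suc i)"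
    by auto
  then show "- x \<in> (\<Union>n. subfield_stage X n)" "inverse x \<in> (\<Union>n. subfield_stage X n)"
    by blast+
qed

lemma countable_gen_subfield:
  assumes "countable X"
  shows "countable (gen_subfield X)"
proof (rule countable_subset)
  show "gen_subfield X \<subseteq> (\<Union>n. subfield_stage X n)"
    unfolding gen_subfield_def
    using is_subfield_UN_subfield_stage subset_UN_subfield_stage by (intro Inter_lower) auto
  show "countable (\<Union>n. subfield_stage X n)"
    using countable_subfield_stage[OF assms] by auto
qed

lemma countable_not_transcendental:
  assumes "countable K"
  shows "countable {x. \<not> transcendental_over K x}"
proof (rule countable_subset)
  show "{x. \<not> transcendental_over K x} \<subseteq> (\<Union>p\<in>Poly ` lists K - {0}. {x. poly p x = 0})"
  proof
    fix x assume "x \<in> {x. \<not> transcendental_over K x}"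
    then obtain p where p: "p \<noteq> 0" "\<forall>i. coeff p i \<in> K" "poly p x = 0"
      by (auto simp: transcendental_over_def)
    then have "coeffs p \<in> lists K"
      by (auto simp: coeffs_def)
    then have "p \<in> Poly ` lists K"
      by (metis Poly_coeffs image_eqI)
    with p show "x \<in> (\<Union>p\<in>Poly ` lists K - {0}. {x. poly p x = 0})"
      by blast
  qed
  show "countable (\<Union>p\<in>Poly ` lists K - {0}. {x. poly p x = 0})"
    using assms poly_roots_finite by (intro countable_UN) (auto intro: countable_finite)
qed

lemma eventually_linear_lt_power2: "eventually (\<lambda>d::nat. real (d + 1) * B < 2 ^ d) at_top"
proof -
  have "(\<lambda>d::nat. B * (real d / 2 ^ d + inverse (2 ^ d))) \<longlonglongrightarrow> 0"
    by (intro tendsto_mult_right_zero tendsto_add_zero lim_n_over_pown LIMSEQ_inverse_realpow_zero) simp_all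
  then have "eventually (\<lambda>d::nat. B * (real d / 2 ^ d + inverse (2 ^ d)) < 1) at_top"
    by (rule order_tendstoD) simp
  then show ?thesis
    by eventually_elim (simp add: field_simps)
qed

locale cantor_embedding = local_field_abs +
  fixes s :: "'a::field"
  assumes s_nonzero: "s \<noteq> 0" and abs_s_le: "absv s \<le> 1 / 8"
begin

definition digit_sum :: "nat \<Rightarrow> (nat \<Rightarrow> bool) \<Rightarrow> 'a" where
  "digit_sum m e = (\<Sum>i<m. if e i then s ^ i else 0)"

lemma abs_s_pos: "absv s > 0"
  using s_nonzero by simp

lemma abs_digit_sum_diff_le:
  assumes "m \<le> m'"
  shows "absv (digit_sum m' e - digit_sum m e) \<le> 8 / 7 * absv s ^ m"
proof -
  have "(\<Sum>i<m' - m. absv s ^ i) \<le> (\<Sum>i. absv s ^ i)"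
    using abs_s_le by (intro sum_le_suminf summable_geometric) auto
  also have "\<dots> = 1 / (1 - absv s)"
    using abs_s_le by (intro suminf_geometric) auto
  also have "\<dots> \<le> 8 / 7"
    using abs_s_le by (simp add: field_simps)
  finally have geometric_le: "(\<Sum>i<m' - m. absv s ^ i) \<le> 8 / 7" .
  have "digit_sum m' e - digit_sum m e = (\<Sum>i\<in>{m..<m'}. if e i then s ^ i else 0)"
    using assms unfolding digit_sum_def by (simp add: sum_diff_nat_ivl flip: atLeast0LessThan)
  then have "absv (digit_sum m' e - digit_sum m e)
      \<le> (\<Sum>i\<in>{m..<m'}. absv (if e i then s ^ i else 0))"
    by (simp add: abs_val_sum_le)
  also have "\<dots> \<le> (\<Sum>i\<in>{m..<m'}. absv s ^ i)"
    by (intro sum_mono) auto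
  also have "\<dots> = absv s ^ m * (\<Sum>i<m' - m. absv s ^ i)"
    by (simp add: sum.atLeastLessThan_shift_0[of _ m] power_add sum_distrib_left atLeast0LessThan)
  also have "\<dots> \<le> absv s ^ m * (8 / 7)"
    by (rule mult_left_mono[OF geometric_le]) simp
  finally show ?thesis
    by (simp add: mult.commute)
qed

text \<open>Completeness is not part of \<^const>\<open>local_field\<close>: the limit is obtained from sequential
  compactness of the unit ball, applied to the rescaled partial sums \<open>s * digit_sum n e\<close>.\<close>

lemma ex_digit_sum_limit: "\<exists>L. \<forall>m. absv (digit_sum m e - L) \<le> 2 * absv s ^ m"
proof -
  have "absv (s * digit_sum n e) \<le> 1" for n
  proof -
    have "absv (digit_sum n e) \<le> 8 / 7"
      using abs_digit_sum_diff_le[of 0 n e] by (simp add: digit_sum_def)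
    then have "absv s * absv (digit_sum n e) \<le> 1 / 8 * (8 / 7)"
      using abs_s_le by (intro mult_mono) auto
    then show ?thesis
      by simp
  qed
  then obtain r L0 where r: "strict_mono r"
    and lim: "(\<lambda>n. absv (s * digit_sum (r n) e - L0)) \<longlonglongrightarrow> 0"
    by (rule bounded_seq_convergent_subseq)
  have "absv (digit_sum m e - L0 / s) \<le> 2 * absv s ^ m" for m
  proof -
    have "0 < 6 / 7 * absv s ^ Suc m"
      using abs_s_pos by simp
    from order_tendstoD(2)[OF lim this]
    obtain N where N: "\<And>n. n \<ge> N \<Longrightarrow> absv (s * digit_sum (r n) e - L0) < 6 / 7 * absv s ^ Suc m"
      unfolding eventually_sequentially by blast
    define n where "n = r (max N m)"
    have "m \<le> n"
      using seq_suble[OF r, of "max N m"] by (simp add: n_def)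
    have "s * digit_sum n e - L0 = s * (digit_sum n e - L0 / s)"
      using s_nonzero by (simp add: algebra_simps)
    then have "absv s * absv (digit_sum n e - L0 / s) < 6 / 7 * absv s ^ Suc m"
      using N[of "max N m"] by (simp add: n_def)
    then have "absv (digit_sum n e - L0 / s) < 6 / 7 * absv s ^ m"
      using abs_s_pos by (simp add: mult.left_commute)
    moreover have "absv (digit_sum m e - digit_sum n e) \<le> 8 / 7 * absv s ^ m"
      using abs_digit_sum_diff_le[OF \<open>m \<le> n\<close>] abs_val_minus_commute by simp
    ultimately show ?thesis
      using abs_val_triangle_diff[of "digit_sum m e" "L0 / s" "digit_sum n e"] by simp
  qed
  then show ?thesis
    by blast
qed

definition cantor_point :: "(nat \<Rightarrow> bool) \<Rightarrow> 'a" where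
  "cantor_point e = (SOME L. \<forall>m. absv (digit_sum m e - L) \<le> 2 * absv s ^ m)"

lemma abs_digit_sum_minus_cantor_point: "absv (digit_sum m e - cantor_point e) \<le> 2 * absv s ^ m"
  using someI_ex[OF ex_digit_sum_limit] unfolding cantor_point_def by blast

lemma abs_cantor_point_diff_ge:
  assumes "prefix l e = prefix l e'" and "e l \<noteq> e' l"
  shows "absv s ^ l / 2 \<le> absv (cantor_point e - cantor_point e')"
proof -
  let ?d = "\<lambda>e. digit_sum (Suc l) e - cantor_point e"
  have "digit_sum l e = digit_sum l e'"
    using assms(1) unfolding digit_sum_def prefix_eq_iff by (intro sum.cong) auto
  then have "absv (digit_sum (Suc l) e - digit_sum (Suc l) e') = absv s ^ l"
    using assms(2) by (cases "e l") (auto simp: digit_sum_def)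
  moreover have "digit_sum (Suc l) e - digit_sum (Suc l) e'
      = ?d e - ?d e' + (cantor_point e - cantor_point e')"
    by simp
  ultimately have "absv s ^ l \<le> absv (?d e - ?d e') + absv (cantor_point e - cantor_point e')"
    using abs_val_triangle by metis
  moreover have "absv (?d e - ?d e') \<le> 4 * absv s ^ Suc l"
    using abs_val_diff_le[of "?d e" "?d e'"] abs_digit_sum_minus_cantor_point[of "Suc l" e]
      abs_digit_sum_minus_cantor_point[of "Suc l" e'] by linarith
  moreover have "4 * absv s ^ Suc l \<le> absv s ^ l / 2"
    using abs_s_le abs_s_pos by simp
  ultimately show ?thesis
    by linarith
qed

lemma inj_cantor_point: "inj cantor_point"
proof (rule injI, rule ccontr)
  fix e e' assume "cantor_point e = cantor_point e'" "e \<noteq> e'"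
  from \<open>e \<noteq> e'\<close> obtain l where "prefix l e = prefix l e'" "e l \<noteq> e' l"
    by (rule ex_first_difference)
  then have "absv s ^ l / 2 \<le> absv (cantor_point e - cantor_point e')"
    by (rule abs_cantor_point_diff_ge)
  with \<open>cantor_point e = cantor_point e'\<close> show False
    using zero_less_power[OF abs_s_pos, of l] by simp
qed

lemma abs_cantor_point_diff_ge_common_prefix:
  assumes "prefix m e \<noteq> prefix m e'"
  shows "absv s ^ card {i. i < m \<and> prefix (Suc i) e' = prefix (Suc i) e} / 2
    \<le> absv (cantor_point e - cantor_point e')"
proof -
  from assms have "e \<noteq> e'"
    by blast
  then obtain l where l: "prefix l e = prefix l e'" "e l \<noteq> e' l"
    by (rule ex_first_difference)
  have "l < m"
    using assms l(1) by (metis linorder_not_le prefix_restrict)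
  have "prefix (Suc i) e' = prefix (Suc i) e \<longleftrightarrow> i < l" for i
  proof
    assume "prefix (Suc i) e' = prefix (Suc i) e"
    then have "\<forall>j\<le>i. e j = e' j"
      by (auto simp: prefix_eq_iff)
    with l(2) show "i < l"
      using not_le by blast
  next
    assume "i < l"
    with l(1) show "prefix (Suc i) e' = prefix (Suc i) e"
      by (auto simp: prefix_eq_iff)
  qed
  with \<open>l < m\<close> have "{i. i < m \<and> prefix (Suc i) e' = prefix (Suc i) e} = {..<l}"
    by auto
  with abs_cantor_point_diff_ge[OF l] show ?thesis
    by simp
qed

lemma prod_abs_cantor_point_diff_ge:
  assumes "finite E" and "inj_on (prefix m) E" and "e \<in> E"
  shows "absv s ^ 2 ^ m / 2 ^ (card E - 1) \<le> (\<Prod>e'\<in>E-{e}. absv (cantor_point e - cantor_point e'))"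
proof -
  define c where "c e' = card {i. i < m \<and> prefix (Suc i) e' = prefix (Suc i) e}" for e'
  have "(\<Sum>e'\<in>E-{e}. c e') \<le> (\<Sum>e'\<in>E. c e')"
    using assms(1) by (intro sum_mono2) auto
  also have "\<dots> \<le> 2 ^ m"
    unfolding c_def using assms(1,2) by (rule sum_card_common_prefix_le)
  finally have "absv s ^ 2 ^ m \<le> absv s ^ (\<Sum>e'\<in>E-{e}. c e')"
    using abs_s_le by (intro power_decreasing) auto
  also have "\<dots> / 2 ^ (card E - 1) = (\<Prod>e'\<in>E-{e}. absv s ^ c e' / 2)"
    using assms(1,3) by (simp add: prod_dividef power_sum card_Diff_singleton)
  also have "\<dots> \<le> (\<Prod>e'\<in>E-{e}. absv (cantor_point e - cantor_point e'))"
  proof (rule prod_mono)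
    fix e' assume "e' \<in> E - {e}"
    with assms(2,3) have "prefix m e \<noteq> prefix m e'"
      by (auto dest: inj_onD)
    then show "0 \<le> absv s ^ c e' / 2 \<and> absv s ^ c e' / 2 \<le> absv (cantor_point e - cantor_point e')"
      unfolding c_def using abs_cantor_point_diff_ge_common_prefix by simp
  qed
  finally show ?thesis
    by (simp add: divide_right_mono)
qed

lemma prod_abs_scaled_cantor_point_diff_ge:
  fixes lam :: 'a
  assumes "finite E" and "inj_on (prefix m) E" and "e \<in> E" and "card E = d + 1"
    and "2 ^ m \<le> 16 * d" and "4 \<le> absv lam * absv s ^ 16"
  shows "2 ^ d \<le> (\<Prod>e'\<in>E-{e}. absv (lam * cantor_point e - lam * cantor_point e'))"
proof -
  have "(2::real) ^ d \<le> (absv lam * absv s ^ 16 / 2) ^ d"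
    using assms(6) by (intro power_mono) auto
  also have "\<dots> = absv lam ^ d * absv s ^ (16 * d) / 2 ^ d"
    by (simp add: power_mult_distrib power_divide power_mult)
  also have "absv s ^ (16 * d) \<le> absv s ^ 2 ^ m"
    using assms(5) abs_s_le by (intro power_decreasing) auto
  also have "absv lam ^ d * absv s ^ 2 ^ m / 2 ^ d
      \<le> absv lam ^ d * (\<Prod>e'\<in>E-{e}. absv (cantor_point e - cantor_point e'))"
    using prod_abs_cantor_point_diff_ge[OF assms(1-3)] assms(4)
    by (simp add: mult_left_mono flip: times_divide_eq_right)
  also have "\<dots> = (\<Prod>e'\<in>E-{e}. absv (lam * cantor_point e - lam * cantor_point e'))"
    using assms(1,3,4) by (simp add: prod.distrib card_Diff_singleton flip: right_diff_distrib)
  finally show ?thesis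
    by (simp add: divide_right_mono mult_left_mono)
qed

lemma card_prefix_image_small_values_le:
  fixes Q :: "'a poly" and B :: real and lam :: 'a
  assumes monic: "lead_coeff Q = 1"
    and B: "real (degree Q + 1) * B < 2 ^ degree Q"
    and m: "2 ^ m \<le> 16 * degree Q"
    and lam: "4 \<le> absv lam * absv s ^ 16"
  shows "card (prefix m ` {e. absv (poly Q (lam * cantor_point e)) \<le> B}) \<le> degree Q"
proof -
  define d where "d = degree Q"
  define A where "A = {e. absv (poly Q (lam * cantor_point e)) \<le> B}"
  have "\<not> d + 1 \<le> card (prefix m ` A)"
  proof
    assume "d + 1 \<le> card (prefix m ` A)"
    then obtain W where "W \<subseteq> prefix m ` A" "card W = d + 1"
      by (rule obtain_subset_with_card_n)
    then obtain E where E: "E \<subseteq> A" "inj_on (prefix m) E" "card E = d + 1"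
      unfolding subset_image_inj by (auto simp: card_image)
    then have "finite E"
      by (simp add: card_ge_0_finite)
    from E(3) obtain e0 where "e0 \<in> E"
      by fastforce
    with E(1) have "B \<ge> 0"
      unfolding A_def using abs_val_nonneg order_trans by blast
    define x where "x e = lam * cantor_point e" for e
    have "inj_on x E"
      using lam inj_cantor_point by (auto simp: x_def inj_on_def dest: injD)
    have "absv (poly Q (x e)) / (\<Prod>e'\<in>E-{e}. absv (x e - x e')) \<le> B / 2 ^ d" if "e \<in> E" for e
    proof (rule frac_le)
      show "absv (poly Q (x e)) \<le> B"
        using that E(1) by (auto simp: A_def x_def)
      show "2 ^ d \<le> (\<Prod>e'\<in>E-{e}. absv (x e - x e'))"
        unfolding x_def using \<open>finite E\<close> E(2,3) that m lam
        by (intro prod_abs_scaled_cantor_point_diff_ge) (auto simp: d_def)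
    qed (use \<open>B \<ge> 0\<close> in auto)
    then have "(\<Sum>e\<in>E. absv (poly Q (x e)) / (\<Prod>e'\<in>E-{e}. absv (x e - x e'))) \<le> real (d + 1) * (B / 2 ^ d)"
      using sum_bounded_above[of E _ "B / 2 ^ d"] E(3) by simp
    also have "\<dots> < 1"
      using B by (simp add: d_def)
    finally show False
      using \<open>finite E\<close> \<open>inj_on x E\<close> monic E(3) monic_interpolation_abs_ge[of E x Q]
      by (simp add: d_def)
  qed
  then show ?thesis
    by (simp add: A_def d_def)
qed

lemma ex_prefix_density_small_values_lt:
  fixes Q :: "'a poly" and B :: real and lam :: 'a
  assumes "lead_coeff Q = 1" and "degree Q \<ge> 1"
    and "real (degree Q + 1) * B < 2 ^ degree Q"
    and "4 \<le> absv lam * absv s ^ 16"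
  shows "\<exists>m. prefix_density m {e. absv (poly Q (lam * cantor_point e)) \<le> B} < 1 / 4"
proof -
  define d where "d = degree Q"
  obtain n where n: "2 ^ n < 4 * (d + 1)" "4 * (d + 1) \<le> 2 ^ (n + 1)"
    using ex_power_ivl2[of 2 "4 * (d + 1)"] by auto
  have "real (4 * (d + 1)) \<le> real (2 ^ (n + 1))"
    using n(2) by (simp only: of_nat_le_iff)
  have "2 ^ (n + 1) \<le> 16 * d"
    using n(1) assms(2) by (simp add: d_def)
  then have "card (prefix (n + 1) ` {e. absv (poly Q (lam * cantor_point e)) \<le> B}) \<le> d"
    unfolding d_def using assms(1,3,4) by (intro card_prefix_image_small_values_le)
  then have "prefix_density (n + 1) {e. absv (poly Q (lam * cantor_point e)) \<le> B} \<le> d / 2 ^ (n + 1)"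
    unfolding prefix_density_def by (simp add: divide_right_mono)
  also have "\<dots> \<le> d / (4 * (d + 1))"
    using \<open>real (4 * (d + 1)) \<le> real (2 ^ (n + 1))\<close> by (intro divide_left_mono) auto
  also have "\<dots> < 1 / 4"
    by (simp add: field_simps)
  finally show ?thesis
    by blast
qed

lemma ex_prefix_density_bounded_values_lt:
  fixes P :: "nat \<Rightarrow> 'a poly" and B :: real and lam :: 'a
  assumes "\<forall>n. lead_coeff (P n) = 1"
    and "filterlim (\<lambda>n. degree (P n)) at_top sequentially"
    and "4 \<le> absv lam * absv s ^ 16"
  shows "\<exists>m. prefix_density m {e. \<forall>n. absv (poly (P n) (lam * cantor_point e)) \<le> B} < 1 / 4"
proof -
  have "eventually (\<lambda>d. 1 \<le> d \<and> real (d + 1) * B < 2 ^ d) at_top"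
    using eventually_ge_at_top[of 1] eventually_linear_lt_power2[of B] by (rule eventually_conj)
  from eventually_compose_filterlim[OF this assms(2)]
  obtain n where "1 \<le> degree (P n)" "real (degree (P n) + 1) * B < 2 ^ degree (P n)"
    unfolding eventually_sequentially by (metis order_refl)
  then obtain m where "prefix_density m {e. absv (poly (P n) (lam * cantor_point e)) \<le> B} < 1 / 4"
    using assms(1,3) ex_prefix_density_small_values_lt by blast
  moreover have "prefix_density m {e. \<forall>n. absv (poly (P n) (lam * cantor_point e)) \<le> B}
      \<le> prefix_density m {e. absv (poly (P n) (lam * cantor_point e)) \<le> B}"
    by (intro prefix_density_mono) auto
  ultimately show ?thesis
    by (meson le_less_trans)
qed

lemma ex_transcendental_unbounded:
  fixes P :: "nat \<Rightarrow> 'a poly" and K :: "'a set" and lam :: 'a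
  assumes "\<forall>n. lead_coeff (P n) = 1"
    and "filterlim (\<lambda>n. degree (P n)) at_top sequentially"
    and "4 \<le> absv lam * absv s ^ 16"
    and "countable K"
  shows "\<exists>\<xi>. transcendental_over K \<xi> \<and> \<not> (\<exists>B. \<forall>n. absv (poly (P n) \<xi>) \<le> B)"
proof -
  define x where "x e = lam * cantor_point e" for e
  define Alg where "Alg = {e. \<not> transcendental_over K (x e)}"
  define Bd where "Bd j = {e. \<forall>n. absv (poly (P n) (x e)) \<le> real j}" for j :: nat
  have "inj x"
    using assms(3) inj_cantor_point by (auto simp: x_def inj_def)
  moreover have "countable (x ` Alg)"
    by (rule countable_subset[OF _ countable_not_transcendental[OF assms(4)]]) (auto simp: Alg_def)
  ultimately have "countable Alg"
    by (blast intro: countable_image_inj_on inj_on_subset)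
  moreover have "incseq Bd"
    unfolding incseq_def Bd_def by (auto intro: order_trans)
  moreover have "\<exists>m. prefix_density m (Bd j) < 1 / 4" for j
    using ex_prefix_density_bounded_values_lt[OF assms(1-3)] by (simp add: Bd_def x_def)
  ultimately obtain e where "e \<notin> Alg" and e: "\<And>j. e \<notin> Bd j"
    using ex_not_in_countable_Un_incseq_of_low_density by metis
  then have "transcendental_over K (x e)"
    by (simp add: Alg_def)
  moreover have "\<not> (\<exists>B. \<forall>n. absv (poly (P n) (x e)) \<le> B)"
  proof
    assume "\<exists>B. \<forall>n. absv (poly (P n) (x e)) \<le> B"
    then obtain B where "\<forall>n. absv (poly (P n) (x e)) \<le> B"
      by blast
    then have "e \<in> Bd (nat \<lceil>B\<rceil>)"
      unfolding Bd_def using real_nat_ceiling_ge[of B] by (auto intro: order_trans)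
    with e show False
      by blast
  qed
  ultimately show ?thesis
    by blast
qed

end

theorem proposition2p5:
  fixes absv :: "'a::field \<Rightarrow> real" and P :: "nat \<Rightarrow> 'a poly" and \<xi>s :: "'a list"
  assumes "local_field absv"
    and "\<forall>n. lead_coeff (P n) = 1"
    and "filterlim (\<lambda>n. degree (P n)) at_top sequentially"
  shows "\<exists>\<xi>. transcendental_over (gen_subfield (set \<xi>s)) \<xi> \<and>
             \<not> (\<exists>B. \<forall>n. absv (poly (P n) \<xi>) \<le> B)"
proof -
  interpret local_field_abs absv
    by unfold_locales (rule assms(1))
  obtain s where s: "s \<noteq> 0" "absv s \<le> 1 / 8"
    using ex_nonzero_abs_val_le[of "1 / 8"] by auto
  interpret cantor_embedding absv s
    by unfold_locales (use assms(1) s in auto)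
  obtain lam where "absv lam \<ge> 4 / absv s ^ 16"
    using ex_abs_val_ge by blast
  then have "4 \<le> absv lam * absv s ^ 16"
    using abs_s_pos by (simp add: field_simps)
  moreover have "countable (gen_subfield (set \<xi>s))"
    by (intro countable_gen_subfield countable_finite) simp
  ultimately show ?thesis
    using assms(2,3) by (intro ex_transcendental_unbounded)
qed

end
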